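(* Let $\Psi$ be a non-negative, real-valued, symmetric function of two positive integers, and for a graph $G$ let $\mathrm{BID}(G)=\sum_{uv\in E(G)}\Psi(d_u,d_v)$. Let $f:[0,\infty)\times[0,\infty)\to\mathbb{R}$ be an extension of $\Psi$. Fix integers $n,m$ and consider connected $(n,m)$-graphs. (i) Let $G$ be a connected $(n,m)$-graph with maximum BID index among all connected $(n,m)$-graphs. Suppose that both expressions $$f(x+t,y)-f(x,y)+f(c-t,y)-f(c,y)\quad\text{and}\quad f(x+t,c-t)-f(x,c)$$ are non-negative for all $x,c,t,y$ with $x\geq c>t\geq 1$, $c\geq 2$, $y\geq 1$. Suppose further that one of the following holds: (a) $f$ is increasing in both variables on $[1,\infty)$, and at least one of the two expressions above is positive (for all such $x,c,t,y$); (b) $f$ is strictly increasing in both variables on $[1,\infty)$. Then the maximum vertex degree in $G$ is $n-1$. (ii) Let $G$ be a connected $(n,m)$-graph with minimum BID index among all connected $(n,m)$-graphs. Suppose that both expressions $$f(x+t,y)-f(x,y)+f(c-t,y)-f(c,y)\quad\text{and}\quad f(x+t,c-t)-f(x,c)$$ are non-positive for all $x,c,t,y$ with $x\geq c>t\geq 1$, $c\geq 2$, $y\geq 1$. Suppose further that one of the following holds: (a) $f$ is decreasing in both variables on $[1,\infty)$, and at least one of the two expressions above is negative (for all such $x,c,t,y$); (b) $f$ is strictly decreasing in both variables on $[1,\infty)$. Then the maximum vertex degree in $G$ is $n-1$.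
   Context: All graphs are finite, simple, undirected and connected. An $(n,m)$-graph is a graph with $n$ vertices and $m$ edges. $d_u$ denotes the degree of vertex $u$ and $E(G)$ the edge set of $G$. *)

theory Defs
  imports Complex_Main
begin

definition simple_graph :: "nat set \<Rightarrow> nat set set \<Rightarrow> bool" where
  "simple_graph V E \<longleftrightarrow> finite V \<and> (\<forall>e\<in>E. e \<subseteq> V \<and> card e = 2)"

definition adj_rel :: "nat set set \<Rightarrow> (nat \<times> nat) set" where
  "adj_rel E = {(a, b). {a, b} \<in> E}"

definition connected_graph :: "nat set \<Rightarrow> nat set set \<Rightarrow> bool" where
  "connected_graph V E \<longleftrightarrow> simple_graph V E \<and> V \<noteq> {} \<and>
     (\<forall>u\<in>V. \<forall>v\<in>V. (u, v) \<in> (adj_rel E)\<^sup>*)"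

definition conn_nm_graph :: "nat \<Rightarrow> nat \<Rightarrow> nat set \<Rightarrow> nat set set \<Rightarrow> bool" where
  "conn_nm_graph n m V E \<longleftrightarrow> connected_graph V E \<and> card V = n \<and> card E = m"

definition degree :: "nat set set \<Rightarrow> nat \<Rightarrow> nat" where
  "degree E u = card {e \<in> E. u \<in> e}"

definition max_degree :: "nat set \<Rightarrow> nat set set \<Rightarrow> nat" where
  "max_degree V E = Max (degree E ` V)"

text \<open>BID(G) = sum over edges uv of Psi(d_u, d_v). For an edge e = {u,v} the inner double sum
  equals Psi(d_u,d_v) + Psi(d_v,d_u), which is 2 Psi(d_u,d_v) for symmetric Psi.\<close>
definition BID :: "(nat \<Rightarrow> nat \<Rightarrow> real) \<Rightarrow> nat set set \<Rightarrow> real" where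
  "BID \<Psi> E = (\<Sum>e\<in>E. (\<Sum>u\<in>e. \<Sum>v\<in>e - {u}. \<Psi> (degree E u) (degree E v)) / 2)"

definition incr_both_on_ge1 :: "(real \<Rightarrow> real \<Rightarrow> real) \<Rightarrow> bool" where
  "incr_both_on_ge1 f \<longleftrightarrow>
     (\<forall>x x' y. 1 \<le> x \<and> x \<le> x' \<and> 1 \<le> y \<longrightarrow> f x y \<le> f x' y \<and> f y x \<le> f y x')"

definition strict_incr_both_on_ge1 :: "(real \<Rightarrow> real \<Rightarrow> real) \<Rightarrow> bool" where
  "strict_incr_both_on_ge1 f \<longleftrightarrow>
     (\<forall>x x' y. 1 \<le> x \<and> x < x' \<and> 1 \<le> y \<longrightarrow> f x y < f x' y \<and> f y x < f y x')"

definition decr_both_on_ge1 :: "(real \<Rightarrow> real \<Rightarrow> real) \<Rightarrow> bool" where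
  "decr_both_on_ge1 f \<longleftrightarrow>
     (\<forall>x x' y. 1 \<le> x \<and> x \<le> x' \<and> 1 \<le> y \<longrightarrow> f x' y \<le> f x y \<and> f y x' \<le> f y x)"

definition strict_decr_both_on_ge1 :: "(real \<Rightarrow> real \<Rightarrow> real) \<Rightarrow> bool" where
  "strict_decr_both_on_ge1 f \<longleftrightarrow>
     (\<forall>x x' y. 1 \<le> x \<and> x < x' \<and> 1 \<le> y \<longrightarrow> f x' y < f x y \<and> f y x' < f y x)"

definition adm :: "real \<Rightarrow> real \<Rightarrow> real \<Rightarrow> real \<Rightarrow> bool" where
  "adm x c t y \<longleftrightarrow> x \<ge> c \<and> c > t \<and> t \<ge> 1 \<and> c \<ge> 2 \<and> y \<ge> 1"

definition expr1 :: "(real \<Rightarrow> real \<Rightarrow> real) \<Rightarrow> real \<Rightarrow> real \<Rightarrow> real \<Rightarrow> real \<Rightarrow> real" where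
  "expr1 f x c t y = f (x + t) y - f x y + f (c - t) y - f c y"

definition expr2 :: "(real \<Rightarrow> real \<Rightarrow> real) \<Rightarrow> real \<Rightarrow> real \<Rightarrow> real \<Rightarrow> real" where
  "expr2 f x c t = f (x + t) (c - t) - f x c"

end

theory Submission
  imports Defs
begin

text \<open>Let u be a vertex of maximum degree x and suppose x < n - 1. Connectivity yields a
  neighbour v of u (of degree c \<le> x) with a private neighbour, i.e. a neighbour of v that is
  neither u nor adjacent to u. Replacing the edges from v to its t \<ge> 1 private neighbours by
  edges from u to them keeps the graph simple, connected, with n vertices and m edges; only the
  degrees of u and v change, to x + t and c - t. Splitting BID at the edge uv, the difference of
  the two indices is a sum of an expr2 term for uv, expr1 terms for the common neighbours of u
  and v, and increments f(x + t, y) - f(x, y) and f(x + t, y) - f(c, y) for the remaining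
  neighbours of u and the moved ones. All are nonnegative and one is positive, contradicting
  maximality. Part (ii) is part (i) for -\<Psi> and -f.\<close>

section \<open>Neighbourhoods in simple graphs\<close>

definition neighbours :: "nat set set \<Rightarrow> nat \<Rightarrow> nat set" where
  "neighbours E p = {z. {p, z} \<in> E}"

definition private_neighbours :: "nat set set \<Rightarrow> nat \<Rightarrow> nat \<Rightarrow> nat set" where
  "private_neighbours E p q = neighbours E p - insert q (neighbours E q)"

lemma neighbours_sym: "q \<in> neighbours E p \<longleftrightarrow> p \<in> neighbours E q"
  by (simp add: neighbours_def insert_commute)

lemma inj_on_doubleton: "inj_on (\<lambda>z. {p, z}) A"
  by (auto simp: inj_on_def doubleton_eq_iff)

lemma simple_graph_finite_edges: "simple_graph V E \<Longrightarrow> finite E"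
  unfolding simple_graph_def by (meson PowI finite_Pow_iff finite_subset subsetI)

lemma simple_graph_edgeE:
  assumes "simple_graph V E" "e \<in> E"
  obtains a b where "a \<noteq> b" "e = {a, b}"
  using assms by (auto simp: simple_graph_def card_2_iff)

lemma neighbours_subset: "simple_graph V E \<Longrightarrow> neighbours E p \<subseteq> V - {p}"
  unfolding simple_graph_def neighbours_def by fastforce

lemma finite_neighbours: "simple_graph V E \<Longrightarrow> finite (neighbours E p)"
  using neighbours_subset by (metis finite_Diff finite_subset simple_graph_def)

lemma incident_edges_eq_image:
  assumes "simple_graph V E"
  shows "{e \<in> E. p \<in> e} = (\<lambda>z. {p, z}) ` neighbours E p"
proof
  show "{e \<in> E. p \<in> e} \<subseteq> (\<lambda>z. {p, z}) ` neighbours E p"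
  proof
    fix e assume e: "e \<in> {e \<in> E. p \<in> e}"
    then obtain a b where "e = {a, b}" using simple_graph_edgeE[OF assms] by blast
    with e have "e = {p, if p = a then b else a}" by auto
    with e show "e \<in> (\<lambda>z. {p, z}) ` neighbours E p" by (auto simp: neighbours_def)
  qed
qed (auto simp: neighbours_def)

lemma degree_eq_card_neighbours: "simple_graph V E \<Longrightarrow> degree E p = card (neighbours E p)"
  unfolding degree_def by (simp add: incident_edges_eq_image card_image inj_on_doubleton)

lemma degree_ge_1_if_neighbour:
  assumes "simple_graph V E" "z \<in> neighbours E p"
  shows "1 \<le> degree E z"
proof -
  have "p \<in> neighbours E z" using assms(2) neighbours_sym by metis
  then show ?thesis
    using finite_neighbours[OF assms(1)] degree_eq_card_neighbours[OF assms(1)]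
    by (metis One_nat_def Suc_leI card_gt_0_iff empty_iff)
qed

lemma degree_le_card_minus_1:
  assumes "simple_graph V E" "p \<in> V"
  shows "degree E p \<le> card V - 1"
proof -
  have "finite V" using assms(1) by (simp add: simple_graph_def)
  then have "card (neighbours E p) \<le> card (V - {p})"
    using neighbours_subset[OF assms(1)] by (intro card_mono) auto
  then show ?thesis using assms by (simp add: degree_eq_card_neighbours)
qed

lemma sum_edges_split_at:
  assumes G: "simple_graph V E" and "u \<noteq> v"
  shows "sum g E = (\<Sum>z\<in>neighbours E u. g {u, z}) + (\<Sum>z\<in>neighbours E v - {u}. g {v, z})
                   + sum g {e \<in> E. u \<notin> e \<and> v \<notin> e}"
proof -
  have fin: "finite E" using simple_graph_finite_edges[OF G] .
  have at_v: "{e \<in> E. u \<notin> e \<and> v \<in> e} = (\<lambda>z. {v, z}) ` (neighbours E v - {u})"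
    using incident_edges_eq_image[OF G, of v] \<open>u \<noteq> v\<close> by auto
  have split: "sum g A = sum g {e \<in> A. P e} + sum g {e \<in> A. \<not> P e}" if "finite A" for A P
    using sum.Int_Diff[OF that, of g "Collect P"] by (simp add: Int_def set_diff_eq)
  have "sum g E = sum g {e \<in> E. u \<in> e} + sum g {e \<in> E. u \<notin> e}"
    using split[OF fin] .
  also have "sum g {e \<in> E. u \<notin> e}
      = sum g {e \<in> E. u \<notin> e \<and> v \<in> e} + sum g {e \<in> E. u \<notin> e \<and> v \<notin> e}"
    using split[of "{e \<in> E. u \<notin> e}" "\<lambda>e. v \<in> e"] fin by (simp add: conj_assoc)
  finally have "sum g E = sum g {e \<in> E. u \<in> e} + sum g {e \<in> E. u \<notin> e \<and> v \<in> e}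
                       + sum g {e \<in> E. u \<notin> e \<and> v \<notin> e}"
    by (simp add: add.assoc)
  then show ?thesis
    by (simp add: incident_edges_eq_image[OF G] at_v sum.reindex inj_on_doubleton)
qed

lemma doubleton_in_image_doubleton:
  "{p, q} \<in> (\<lambda>z. {r, z}) ` A \<longleftrightarrow> p = r \<and> q \<in> A \<or> q = r \<and> p \<in> A"
  by (auto simp: doubleton_eq_iff image_iff)

lemma rtrancl_leaves_set:
  "(p, q) \<in> r\<^sup>* \<Longrightarrow> p \<in> S \<Longrightarrow> q \<notin> S \<Longrightarrow> \<exists>a b. (a, b) \<in> r \<and> a \<in> S \<and> b \<notin> S"
  by (induction rule: rtrancl_induct) auto

lemma exists_neighbour_with_private_neighbour:
  assumes G: "connected_graph V E" and u: "u \<in> V" and deg: "degree E u < card V - 1"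
  obtains v where "v \<in> neighbours E u" "private_neighbours E v u \<noteq> {}"
proof -
  have simple: "simple_graph V E" and finV: "finite V"
    using G by (auto simp: connected_graph_def simple_graph_def)
  have "card (neighbours E u) < card (V - {u})"
    using deg u finV by (simp add: degree_eq_card_neighbours[OF simple])
  then have "\<not> V - {u} \<subseteq> neighbours E u"
    using card_mono[OF finite_neighbours[OF simple]] leD by blast
  then obtain w where w: "w \<in> V" "w \<notin> insert u (neighbours E u)" by blast
  have "(u, w) \<in> (adj_rel E)\<^sup>*" using G u w(1) by (simp add: connected_graph_def)
  from rtrancl_leaves_set[OF this insertI1 w(2)] obtain a b where ab: "(a, b) \<in> adj_rel E"
    "a \<in> insert u (neighbours E u)" "b \<notin> insert u (neighbours E u)"
    by blast
  then have "b \<in> neighbours E a" by (simp add: adj_rel_def neighbours_def)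
  with ab have "a \<in> neighbours E u" "b \<in> private_neighbours E a u"
    by (auto simp: private_neighbours_def)
  then show ?thesis using that by blast
qed

lemma max_degree_attained:
  assumes "simple_graph V E" "V \<noteq> {}"
  obtains u where "u \<in> V" "max_degree V E = degree E u" "\<And>z. z \<in> V \<Longrightarrow> degree E z \<le> degree E u"
proof -
  have fin: "finite (degree E ` V)" using assms(1) by (simp add: simple_graph_def)
  then have "max_degree V E \<in> degree E ` V"
    unfolding max_degree_def using assms(2) by (intro Max_in) auto
  then obtain u where "u \<in> V" "max_degree V E = degree E u" by blast
  moreover have "degree E z \<le> max_degree V E" if "z \<in> V" for z
    unfolding max_degree_def using fin that by (intro Max_ge) auto
  ultimately show ?thesis using that by simp
qed

section \<open>Splitting the BID index at an edge\<close>

definition edge_weight :: "(nat \<Rightarrow> nat \<Rightarrow> real) \<Rightarrow> (nat \<Rightarrow> nat) \<Rightarrow> nat set \<Rightarrow> real" where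
  "edge_weight \<Psi> D e = (\<Sum>a\<in>e. \<Sum>b\<in>e - {a}. \<Psi> (D a) (D b)) / 2"

lemma BID_eq_sum_edge_weight: "BID \<Psi> E = sum (edge_weight \<Psi> (degree E)) E"
  unfolding BID_def edge_weight_def ..

definition symmetric_on_pos :: "(nat \<Rightarrow> nat \<Rightarrow> real) \<Rightarrow> bool" where
  "symmetric_on_pos \<Psi> \<longleftrightarrow> (\<forall>a b. 1 \<le> a \<longrightarrow> 1 \<le> b \<longrightarrow> \<Psi> a b = \<Psi> b a)"

lemma edge_weight_doubleton:
  assumes sym: "symmetric_on_pos \<Psi>"
    and "p \<noteq> z" "1 \<le> D p" "1 \<le> D z"
  shows "edge_weight \<Psi> D {p, z} = \<Psi> (D p) (D z)"
  using assms by (simp add: symmetric_on_pos_def edge_weight_def insert_Diff_if)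

lemma edge_weight_cong: "(\<And>p. p \<in> e \<Longrightarrow> D p = D' p) \<Longrightarrow> edge_weight \<Psi> D e = edge_weight \<Psi> D' e"
  unfolding edge_weight_def by (intro arg_cong[where f = "\<lambda>s. s / 2"] sum.cong) auto

lemma BID_split_at_edge:
  assumes sym: "symmetric_on_pos \<Psi>"
    and G: "simple_graph V E" and uv: "v \<in> neighbours E u"
  shows "BID \<Psi> E = \<Psi> (degree E u) (degree E v)
     + (\<Sum>z\<in>neighbours E u \<inter> neighbours E v. \<Psi> (degree E u) (degree E z) + \<Psi> (degree E v) (degree E z))
     + (\<Sum>z\<in>private_neighbours E u v. \<Psi> (degree E u) (degree E z))
     + (\<Sum>z\<in>private_neighbours E v u. \<Psi> (degree E v) (degree E z))
     + sum (edge_weight \<Psi> (degree E)) {e \<in> E. u \<notin> e \<and> v \<notin> e}"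
proof -
  let ?D = "degree E"
  define C where "C = neighbours E u \<inter> neighbours E v"
  define Pu where "Pu = private_neighbours E u v"
  define Pv where "Pv = private_neighbours E v u"
  have "u \<noteq> v" using uv neighbours_subset[OF G] by blast
  have weight: "edge_weight \<Psi> ?D {p, z} = \<Psi> (?D p) (?D z)" if "z \<in> neighbours E p" for p z
  proof (rule edge_weight_doubleton[OF sym])
    show "p \<noteq> z" using that neighbours_subset[OF G] by blast
    show "1 \<le> ?D z" using degree_ge_1_if_neighbour[OF G that] .
    show "1 \<le> ?D p" using degree_ge_1_if_neighbour[OF G] that neighbours_sym by metis
  qed
  have Nu: "neighbours E u = insert v (C \<union> Pu)" and v_notin: "v \<notin> C \<union> Pu"
    using uv neighbours_subset[OF G, of v] by (auto simp: C_def Pu_def private_neighbours_def)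
  have Nv: "neighbours E v - {u} = C \<union> Pv"
    using neighbours_subset[OF G, of u] by (auto simp: C_def Pv_def private_neighbours_def)
  have disj: "C \<inter> Pu = {}" "C \<inter> Pv = {}"
    by (auto simp: C_def Pu_def Pv_def private_neighbours_def)
  have fin: "finite C" "finite Pu" "finite Pv"
    using finite_neighbours[OF G] by (auto simp: C_def Pu_def Pv_def private_neighbours_def)
  have "(\<Sum>z\<in>neighbours E u. edge_weight \<Psi> ?D {u, z}) = (\<Sum>z\<in>neighbours E u. \<Psi> (?D u) (?D z))"
    using weight by (rule sum.cong[OF refl])
  also have "\<dots> = \<Psi> (?D u) (?D v) + (\<Sum>z\<in>C. \<Psi> (?D u) (?D z)) + (\<Sum>z\<in>Pu. \<Psi> (?D u) (?D z))"
    unfolding Nu using v_notin fin disj by (simp add: sum.union_disjoint add.assoc)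
  finally have sum_u: "(\<Sum>z\<in>neighbours E u. edge_weight \<Psi> ?D {u, z})
      = \<Psi> (?D u) (?D v) + (\<Sum>z\<in>C. \<Psi> (?D u) (?D z)) + (\<Sum>z\<in>Pu. \<Psi> (?D u) (?D z))" .
  have "(\<Sum>z\<in>neighbours E v - {u}. edge_weight \<Psi> ?D {v, z})
      = (\<Sum>z\<in>C \<union> Pv. \<Psi> (?D v) (?D z))"
    unfolding Nv[symmetric] using weight by (intro sum.cong) auto
  also have "\<dots> = (\<Sum>z\<in>C. \<Psi> (?D v) (?D z)) + (\<Sum>z\<in>Pv. \<Psi> (?D v) (?D z))"
    using fin disj by (simp add: sum.union_disjoint)
  finally show ?thesis
    using sum_u sum_edges_split_at[OF G \<open>u \<noteq> v\<close>, of "edge_weight \<Psi> ?D"]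
    by (simp add: BID_eq_sum_edge_weight sum.distrib C_def Pu_def Pv_def)
qed

lemma adm_of_nat_iff:
  "adm (real x) (real c) (real t) (real y) \<longleftrightarrow> c \<le> x \<and> t < c \<and> 1 \<le> t \<and> 2 \<le> c \<and> 1 \<le> y"
  unfolding adm_def by linarith

definition extension_of :: "(real \<Rightarrow> real \<Rightarrow> real) \<Rightarrow> (nat \<Rightarrow> nat \<Rightarrow> real) \<Rightarrow> bool" where
  "extension_of f \<Psi> \<longleftrightarrow> (\<forall>a b. 1 \<le> a \<longrightarrow> 1 \<le> b \<longrightarrow> f (real a) (real b) = \<Psi> a b)"

text \<open>The side condition t + 1 \<le> c keeps x - t in [1, \<infinity>), where f is monotone (this is
  what lets a positive expr1 imply the gain); for integer parameters it follows from t < c.\<close>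

definition moved_edges_gain_pos :: "(real \<Rightarrow> real \<Rightarrow> real) \<Rightarrow> bool" where
  "moved_edges_gain_pos f \<longleftrightarrow> (\<forall>x c t y. adm x c t y \<and> t + 1 \<le> c \<longrightarrow> f c y < f (x + t) y)"

lemma extension_of_values_at:
  fixes \<Psi> :: "nat \<Rightarrow> nat \<Rightarrow> real" and f :: "real \<Rightarrow> real \<Rightarrow> real"
  assumes ext: "extension_of f \<Psi>"
    and adm: "adm (real x) (real c) (real t) (real y)"
  shows "f (real x + real t) (real c - real t) = \<Psi> (x + t) (c - t)"
    and "f (real x + real t) (real y) = \<Psi> (x + t) y" "f (real c - real t) (real y) = \<Psi> (c - t) y"
    and "f (real x) (real c) = \<Psi> x c" "f (real x) (real y) = \<Psi> x y" "f (real c) (real y) = \<Psi> c y"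
proof -
  have eq: "f (real a) (real b) = \<Psi> a b" if "1 \<le> a" "1 \<le> b" for a b
    using ext that by (simp add: extension_of_def)
  from adm have "c \<le> x" "t < c" "1 \<le> t" "1 \<le> y" by (simp_all add: adm_of_nat_iff)
  then show "f (real x + real t) (real c - real t) = \<Psi> (x + t) (c - t)"
    and "f (real x + real t) (real y) = \<Psi> (x + t) y" "f (real c - real t) (real y) = \<Psi> (c - t) y"
    and "f (real x) (real c) = \<Psi> x c" "f (real x) (real y) = \<Psi> x y" "f (real c) (real y) = \<Psi> c y"
    using eq[of "x + t" "c - t"] eq[of "x + t" y] eq[of "c - t" y] eq[of x c] eq[of x y] eq[of c y]
    by (simp_all add: of_nat_diff)
qed

lemma shift_gains:
  fixes \<Psi> :: "nat \<Rightarrow> nat \<Rightarrow> real" and f :: "real \<Rightarrow> real \<Rightarrow> real"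
  assumes ext: "extension_of f \<Psi>"
    and adm: "adm (real x) (real c) (real t) (real y)"
    and nonneg: "\<forall>x c t y. adm x c t y \<longrightarrow> expr1 f x c t y \<ge> 0 \<and> expr2 f x c t \<ge> 0"
    and incr: "incr_both_on_ge1 f"
  shows "\<Psi> x c \<le> \<Psi> (x + t) (c - t)"
    and "\<Psi> x y + \<Psi> c y \<le> \<Psi> (x + t) y + \<Psi> (c - t) y"
    and "\<Psi> x y \<le> \<Psi> (x + t) y"
    and "\<Psi> c y \<le> \<Psi> (x + t) y"
proof -
  note shifted = extension_of_values_at[OF ext adm]
  from nonneg adm have "expr1 f (real x) (real c) (real t) (real y) \<ge> 0"
    and "expr2 f (real x) (real c) (real t) \<ge> 0" by blast+
  then show "\<Psi> x c \<le> \<Psi> (x + t) (c - t)" "\<Psi> x y + \<Psi> c y \<le> \<Psi> (x + t) y + \<Psi> (c - t) y"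
    by (simp_all add: expr1_def expr2_def shifted)
  from incr adm show "\<Psi> x y \<le> \<Psi> (x + t) y" "\<Psi> c y \<le> \<Psi> (x + t) y"
    by (auto simp: incr_both_on_ge1_def adm_def shifted[symmetric])
qed

lemma shift_gain_edge_strict:
  fixes \<Psi> :: "nat \<Rightarrow> nat \<Rightarrow> real" and f :: "real \<Rightarrow> real \<Rightarrow> real"
  assumes ext: "extension_of f \<Psi>"
    and adm: "adm (real x) (real c) (real t) (real y)"
    and pos: "\<forall>x c t y. adm x c t y \<longrightarrow> expr2 f x c t > 0"
  shows "\<Psi> x c < \<Psi> (x + t) (c - t)"
proof -
  from pos adm have "expr2 f (real x) (real c) (real t) > 0" by blast
  then show ?thesis by (simp add: expr2_def extension_of_values_at[OF ext adm])
qed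

lemma shift_gain_moved_strict:
  fixes \<Psi> :: "nat \<Rightarrow> nat \<Rightarrow> real" and f :: "real \<Rightarrow> real \<Rightarrow> real"
  assumes ext: "extension_of f \<Psi>"
    and adm: "adm (real x) (real c) (real t) (real y)"
    and gain: "moved_edges_gain_pos f"
  shows "\<Psi> c y < \<Psi> (x + t) y"
proof -
  from adm have "real t + 1 \<le> real c" by (simp add: adm_of_nat_iff)
  with gain adm have "f (real c) (real y) < f (real x + real t) (real y)"
    unfolding moved_edges_gain_pos_def by blast
  then show ?thesis by (simp add: extension_of_values_at[OF ext adm])
qed

lemma moved_edges_gain_pos_if_expr1_pos:
  assumes incr: "incr_both_on_ge1 f" and pos: "\<forall>x c t y. adm x c t y \<longrightarrow> expr1 f x c t y > 0"
  shows "moved_edges_gain_pos f"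
  unfolding moved_edges_gain_pos_def
proof (intro allI impI)
  fix x c t y assume "adm x c t y \<and> t + 1 \<le> c"
  then have adm: "adm x c t y" and "t + 1 \<le> c" by simp_all
  then have "adm x x t y" by (simp add: adm_def)
  with pos have "expr1 f x x t y > 0" by blast
  then have "f x y < f (x + t) y + f (x - t) y - f x y" by (simp add: expr1_def)
  moreover have "f (x - t) y \<le> f x y" "f c y \<le> f x y"
    using incr adm \<open>t + 1 \<le> c\<close> by (simp_all add: incr_both_on_ge1_def adm_def)
  ultimately show "f c y < f (x + t) y" by linarith
qed

lemma moved_edges_gain_pos_if_strict_incr:
  "strict_incr_both_on_ge1 f \<Longrightarrow> moved_edges_gain_pos f"
  by (simp add: moved_edges_gain_pos_def strict_incr_both_on_ge1_def adm_def)

lemma incr_if_strict_incr: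
  assumes "strict_incr_both_on_ge1 f"
  shows "incr_both_on_ge1 f"
  unfolding incr_both_on_ge1_def
proof (intro allI impI)
  fix x x' y :: real assume "1 \<le> x \<and> x \<le> x' \<and> 1 \<le> y"
  with assms show "f x y \<le> f x' y \<and> f y x \<le> f y x'"
    by (cases "x = x'") (auto simp: strict_incr_both_on_ge1_def less_le)
qed

section \<open>Moving the private neighbours of v to u\<close>

definition shift_private_neighbours :: "nat set set \<Rightarrow> nat \<Rightarrow> nat \<Rightarrow> nat set set" where
  "shift_private_neighbours E v u =
     (E - (\<lambda>z. {v, z}) ` private_neighbours E v u) \<union> (\<lambda>z. {u, z}) ` private_neighbours E v u"

locale private_shift =
  fixes V :: "nat set" and E :: "nat set set" and u v :: nat
  assumes simple: "simple_graph V E" and adjacent: "v \<in> neighbours E u"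
begin

abbreviation B :: "nat set" where "B \<equiv> private_neighbours E v u"
abbreviation E' :: "nat set set" where "E' \<equiv> shift_private_neighbours E v u"

lemma u_ne_v: "u \<noteq> v"
  using adjacent neighbours_subset[OF simple] by blast

lemma u_neighbour_v: "u \<in> neighbours E v"
  using adjacent neighbours_sym by metis

lemma B_subset: "B \<subseteq> neighbours E v - {u}"
  by (auto simp: private_neighbours_def)

lemma B_disjoint: "B \<inter> neighbours E u = {}"
  by (auto simp: private_neighbours_def)

lemma u_notin_B: "u \<notin> B"
  using B_subset by blast

lemma v_notin_B: "v \<notin> B"
  using neighbours_subset[OF simple, of v] by (auto simp: private_neighbours_def)

lemma finite_B: "finite B"
  using B_subset finite_neighbours[OF simple] by (meson finite_Diff finite_subset)

lemma shifted_edge_iff: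
  "{p, q} \<in> E' \<longleftrightarrow>
     {p, q} \<in> E \<and> \<not> (p = v \<and> q \<in> B \<or> q = v \<and> p \<in> B) \<or> p = u \<and> q \<in> B \<or> q = u \<and> p \<in> B"
  by (simp add: shift_private_neighbours_def doubleton_in_image_doubleton)

lemma neighbours_shift_u: "neighbours E' u = neighbours E u \<union> B"
  using u_ne_v B_subset by (auto simp: neighbours_def shifted_edge_iff)

lemma neighbours_shift_v: "neighbours E' v = neighbours E v - B"
  using u_ne_v v_notin_B by (auto simp: neighbours_def shifted_edge_iff)

lemma neighbours_shift_other:
  "p \<noteq> u \<Longrightarrow> p \<noteq> v \<Longrightarrow>
     neighbours E' p = (if p \<in> B then insert u (neighbours E p - {v}) else neighbours E p)"
  by (auto simp: neighbours_def shifted_edge_iff)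

lemma simple_graph_shift: "simple_graph V E'"
proof -
  have "u \<in> V" using u_neighbour_v neighbours_subset[OF simple] by blast
  have new_edges: "{u, z} \<subseteq> V \<and> card {u, z} = 2" if "z \<in> B" for z
  proof -
    have "z \<noteq> u" "z \<in> V" using that B_subset u_notin_B neighbours_subset[OF simple, of v] by auto
    with \<open>u \<in> V\<close> show ?thesis by simp
  qed
  show ?thesis
    using simple new_edges unfolding simple_graph_def shift_private_neighbours_def by auto
qed

lemma card_shift: "card E' = card E"
proof -
  have fin: "finite E" using simple_graph_finite_edges[OF simple] .
  have moved: "(\<lambda>z. {v, z}) ` B \<subseteq> E"
    using B_subset by (auto simp: neighbours_def)
  have "(\<lambda>z. {u, z}) ` B \<inter> E = {}"
    using B_disjoint by (auto simp: neighbours_def)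
  then have "card E' = card (E - (\<lambda>z. {v, z}) ` B) + card ((\<lambda>z. {u, z}) ` B)"
    unfolding shift_private_neighbours_def using fin finite_B by (intro card_Un_disjoint) auto
  also have "\<dots> = card E"
    using moved fin finite_B card_mono[OF fin moved]
    by (simp add: card_Diff_subset card_image inj_on_doubleton finite_subset)
  finally show ?thesis .
qed

lemma adj_rel_subset_rtrancl_shift: "adj_rel E \<subseteq> (adj_rel E')\<^sup>*"
proof clarify
  fix p q assume "(p, q) \<in> adj_rel E"
  then have pq: "{p, q} \<in> E" by (simp add: adj_rel_def)
  have via_u: "(v, u) \<in> adj_rel E'" "(u, v) \<in> adj_rel E'" "(u, z) \<in> adj_rel E'" "(z, u) \<in> adj_rel E'"
    if "z \<in> B" for z
    using that adjacent u_neighbour_v u_notin_B v_notin_B u_ne_v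
    by (auto simp: adj_rel_def shifted_edge_iff neighbours_def)
  show "(p, q) \<in> (adj_rel E')\<^sup>*"
  proof (cases "{p, q} \<in> E'")
    case True
    then show ?thesis by (simp add: adj_rel_def r_into_rtrancl)
  next
    case False
    then have "p = v \<and> q \<in> B \<or> q = v \<and> p \<in> B" using pq shifted_edge_iff by blast
    then show ?thesis using via_u by (meson converse_rtrancl_into_rtrancl r_into_rtrancl)
  qed
qed

lemma connected_graph_shift: "connected_graph V E \<Longrightarrow> connected_graph V E'"
  using simple_graph_shift rtrancl_subset_rtrancl[OF adj_rel_subset_rtrancl_shift]
  unfolding connected_graph_def by blast

lemma degree_shift_u: "degree E' u = degree E u + card B"
  using finite_neighbours[OF simple] finite_B B_disjoint
  by (simp add: degree_eq_card_neighbours[OF simple] degree_eq_card_neighbours[OF simple_graph_shift]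
      neighbours_shift_u card_Un_disjoint Int_commute)

lemma degree_shift_v: "degree E' v = degree E v - card B"
proof -
  have "B \<subseteq> neighbours E v" using B_subset by blast
  then show ?thesis using finite_B
    by (simp add: degree_eq_card_neighbours[OF simple] degree_eq_card_neighbours[OF simple_graph_shift]
      neighbours_shift_v card_Diff_subset)
qed

lemma degree_shift_other: "p \<noteq> u \<Longrightarrow> p \<noteq> v \<Longrightarrow> degree E' p = degree E p"
proof -
  assume p: "p \<noteq> u" "p \<noteq> v"
  have "card (insert u (neighbours E p - {v})) = card (neighbours E p)" if "p \<in> B"
  proof -
    have "v \<in> neighbours E p" "u \<notin> neighbours E p"
      using that neighbours_sym by (auto simp: private_neighbours_def)
    moreover have "finite (neighbours E p)" using finite_neighbours[OF simple] .
    ultimately have "card (neighbours E p) > 0" by (auto simp: card_gt_0_iff)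
    with \<open>u \<notin> neighbours E p\<close> \<open>v \<in> neighbours E p\<close> \<open>finite (neighbours E p)\<close> show ?thesis
      by (simp add: card.insert_remove card_Diff_singleton)
  qed
  then show ?thesis
    using p by (simp add: degree_eq_card_neighbours[OF simple] degree_eq_card_neighbours[OF simple_graph_shift]
      neighbours_shift_other)
qed

lemma BID_shift:
  assumes sym: "symmetric_on_pos \<Psi>"
  shows "BID \<Psi> E' = \<Psi> (degree E u + card B) (degree E v - card B)
     + (\<Sum>z\<in>neighbours E u \<inter> neighbours E v.
          \<Psi> (degree E u + card B) (degree E z) + \<Psi> (degree E v - card B) (degree E z))
     + (\<Sum>z\<in>private_neighbours E u v. \<Psi> (degree E u + card B) (degree E z))
     + (\<Sum>z\<in>B. \<Psi> (degree E u + card B) (degree E z))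
     + sum (edge_weight \<Psi> (degree E)) {e \<in> E. u \<notin> e \<and> v \<notin> e}"
proof -
  let ?D = "degree E" and ?D' = "degree E'" and ?C = "neighbours E u \<inter> neighbours E v"
    and ?P = "private_neighbours E u v"
  have adjacent': "v \<in> neighbours E' u" using adjacent by (simp add: neighbours_shift_u)
  have same_degree: "?D' z = ?D z" if "z \<in> ?C \<union> ?P \<union> B" for z
  proof (rule degree_shift_other)
    show "z \<noteq> u" "z \<noteq> v"
      using that neighbours_subset[OF simple] u_notin_B v_notin_B
      by (auto simp: private_neighbours_def)
  qed
  have sum_C: "(\<Sum>z\<in>?C. \<Psi> a (?D' z) + \<Psi> b (?D' z)) = (\<Sum>z\<in>?C. \<Psi> a (?D z) + \<Psi> b (?D z))" for a b
    by (intro sum.cong refl) (simp add: same_degree)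
  have common: "neighbours E' u \<inter> neighbours E' v = ?C"
    using B_disjoint by (auto simp: neighbours_shift_u neighbours_shift_v)
  have private_u: "private_neighbours E' u v = ?P \<union> B"
    using B_disjoint v_notin_B
    by (auto simp: private_neighbours_def neighbours_shift_u neighbours_shift_v)
  have private_v: "private_neighbours E' v u = {}"
    by (auto simp: private_neighbours_def neighbours_shift_u neighbours_shift_v)
  have "B \<inter> ?P = {}" "finite ?P"
    using B_disjoint finite_neighbours[OF simple] by (auto simp: private_neighbours_def)
  then have sum_private: "(\<Sum>z\<in>?P \<union> B. g z) = (\<Sum>z\<in>?P. g z) + (\<Sum>z\<in>B. g z)"
    for g :: "nat \<Rightarrow> real"
    using finite_B by (simp add: sum.union_disjoint Int_commute)
  have rest_edges: "{e \<in> E'. u \<notin> e \<and> v \<notin> e} = {e \<in> E. u \<notin> e \<and> v \<notin> e}"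
    by (auto simp: shift_private_neighbours_def)
  have rest: "sum (edge_weight \<Psi> ?D') {e \<in> E. u \<notin> e \<and> v \<notin> e}
      = sum (edge_weight \<Psi> ?D) {e \<in> E. u \<notin> e \<and> v \<notin> e}"
    by (intro sum.cong edge_weight_cong refl) (metis (mono_tags, lifting) degree_shift_other mem_Collect_eq)
  from BID_split_at_edge[OF sym simple_graph_shift adjacent'] show ?thesis
    unfolding common private_u private_v rest_edges rest sum_private sum.empty
      degree_shift_u degree_shift_v
    by (simp add: sum_C same_degree add.assoc cong: sum.cong)
qed

lemma adm_shift:
  assumes "degree E v \<le> degree E u" "B \<noteq> {}" "1 \<le> y"
  shows "adm (real (degree E u)) (real (degree E v)) (real (card B)) (real y)"
proof -
  have "1 \<le> card B" using assms(2) finite_B by (simp add: Suc_le_eq card_gt_0_iff)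
  moreover have "card B \<le> card (neighbours E v - {u})"
    using B_subset finite_neighbours[OF simple] by (intro card_mono) auto
  then have "card B \<le> degree E v - 1"
    using u_neighbour_v finite_neighbours[OF simple] by (simp add: degree_eq_card_neighbours[OF simple])
  ultimately show ?thesis using assms(1,3) by (auto simp: adm_of_nat_iff)
qed

lemma BID_less_BID_shift:
  fixes \<Psi> :: "nat \<Rightarrow> nat \<Rightarrow> real" and f :: "real \<Rightarrow> real \<Rightarrow> real"
  assumes sym: "symmetric_on_pos \<Psi>"
    and ext: "extension_of f \<Psi>"
    and nonneg: "\<forall>x c t y. adm x c t y \<longrightarrow> expr1 f x c t y \<ge> 0 \<and> expr2 f x c t \<ge> 0"
    and incr: "incr_both_on_ge1 f"
    and strict: "(\<forall>x c t y. adm x c t y \<longrightarrow> expr2 f x c t > 0) \<or> moved_edges_gain_pos f"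
    and deg: "degree E v \<le> degree E u" and moved: "B \<noteq> {}"
  shows "BID \<Psi> E < BID \<Psi> E'"
proof -
  define x c t where "x = degree E u" and "c = degree E v" and "t = card B"
  let ?D = "degree E" and ?C = "neighbours E u \<inter> neighbours E v"
    and ?P = "private_neighbours E u v"
  have adm: "adm (real x) (real c) (real t) (real y)" if "1 \<le> y" for y
    using adm_shift[OF deg moved that] by (simp add: x_def c_def t_def)
  have pos_C: "1 \<le> ?D z" if "z \<in> ?C" for z
    using that degree_ge_1_if_neighbour[OF simple] by blast
  have pos_P: "1 \<le> ?D z" if "z \<in> ?P" for z
    using that degree_ge_1_if_neighbour[OF simple] by (auto simp: private_neighbours_def)
  have pos_B: "1 \<le> ?D z" if "z \<in> B" for z
    using that degree_ge_1_if_neighbour[OF simple] by (auto simp: private_neighbours_def)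
  note gains = shift_gains[OF ext adm nonneg incr]
  have edge_gain: "\<Psi> x c \<le> \<Psi> (x + t) (c - t)" using gains(1)[OF order.refl] .
  have common_gain: "(\<Sum>z\<in>?C. \<Psi> x (?D z) + \<Psi> c (?D z)) \<le> (\<Sum>z\<in>?C. \<Psi> (x + t) (?D z) + \<Psi> (c - t) (?D z))"
    by (intro sum_mono gains(2) pos_C)
  have private_gain: "(\<Sum>z\<in>?P. \<Psi> x (?D z)) \<le> (\<Sum>z\<in>?P. \<Psi> (x + t) (?D z))"
    by (intro sum_mono gains(3) pos_P)
  have moved_gain: "(\<Sum>z\<in>B. \<Psi> c (?D z)) \<le> (\<Sum>z\<in>B. \<Psi> (x + t) (?D z))"
    by (intro sum_mono gains(4) pos_B)
  from strict have "\<Psi> x c < \<Psi> (x + t) (c - t) \<or> (\<Sum>z\<in>B. \<Psi> c (?D z)) < (\<Sum>z\<in>B. \<Psi> (x + t) (?D z))"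
  proof
    assume "\<forall>x c t y. adm x c t y \<longrightarrow> expr2 f x c t > 0"
    then show ?thesis using shift_gain_edge_strict[OF ext adm[OF order.refl]] by blast
  next
    assume "moved_edges_gain_pos f"
    then have "(\<Sum>z\<in>B. \<Psi> c (?D z)) < (\<Sum>z\<in>B. \<Psi> (x + t) (?D z))"
      by (intro sum_strict_mono finite_B moved shift_gain_moved_strict[OF ext adm] pos_B)
    then show ?thesis ..
  qed
  then show ?thesis
    using BID_split_at_edge[OF sym simple adjacent] BID_shift[OF sym]
      edge_gain common_gain private_gain moved_gain
    unfolding x_def c_def t_def by linarith
qed

end

lemma max_BID_imp_max_degree:
  fixes \<Psi> :: "nat \<Rightarrow> nat \<Rightarrow> real" and f :: "real \<Rightarrow> real \<Rightarrow> real"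
  assumes sym: "symmetric_on_pos \<Psi>" and ext: "extension_of f \<Psi>" and G: "conn_nm_graph n m V E"
    and max: "\<forall>V' E'. conn_nm_graph n m V' E' \<longrightarrow> BID \<Psi> E' \<le> BID \<Psi> E"
    and nonneg: "\<forall>x c t y. adm x c t y \<longrightarrow> expr1 f x c t y \<ge> 0 \<and> expr2 f x c t \<ge> 0"
    and cond: "(incr_both_on_ge1 f \<and>
        ((\<forall>x c t y. adm x c t y \<longrightarrow> expr1 f x c t y > 0) \<or>
         (\<forall>x c t y. adm x c t y \<longrightarrow> expr2 f x c t > 0)))
      \<or> strict_incr_both_on_ge1 f"
  shows "max_degree V E = n - 1"
proof -
  have incr: "incr_both_on_ge1 f"
    using cond incr_if_strict_incr by (elim disjE conjE)
  from cond have strict: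
      "(\<forall>x c t y. adm x c t y \<longrightarrow> expr2 f x c t > 0) \<or> moved_edges_gain_pos f"
    using moved_edges_gain_pos_if_expr1_pos[OF incr] moved_edges_gain_pos_if_strict_incr by (elim disjE conjE) simp_all
  have conn: "connected_graph V E" and simple: "simple_graph V E" and "card V = n" "V \<noteq> {}"
    using G by (auto simp: conn_nm_graph_def connected_graph_def)
  obtain u where u: "u \<in> V" "max_degree V E = degree E u"
    and u_max: "\<And>z. z \<in> V \<Longrightarrow> degree E z \<le> degree E u"
    using max_degree_attained[OF simple \<open>V \<noteq> {}\<close>] by blast
  have "degree E u \<le> n - 1" using degree_le_card_minus_1[OF simple u(1)] \<open>card V = n\<close> by simp
  moreover have "\<not> degree E u < n - 1"
  proof
    assume "degree E u < n - 1"
    then obtain v where v: "v \<in> neighbours E u" "private_neighbours E v u \<noteq> {}"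
      using exists_neighbour_with_private_neighbour[OF conn u(1)] \<open>card V = n\<close> by blast
    interpret private_shift V E u v using simple v(1) by unfold_locales
    have "degree E v \<le> degree E u" using u_max neighbours_subset[OF simple] v(1) by blast
    then have "BID \<Psi> E < BID \<Psi> E'"
      using BID_less_BID_shift[OF sym ext nonneg incr strict] v(2) by blast
    moreover have "conn_nm_graph n m V E'"
      using G connected_graph_shift[OF conn] card_shift by (simp add: conn_nm_graph_def)
    with max have "BID \<Psi> E' \<le> BID \<Psi> E" by blast
    ultimately show False by linarith
  qed
  ultimately show ?thesis using u(2) by linarith
qed

lemma min_BID_imp_max_degree:
  fixes \<Psi> :: "nat \<Rightarrow> nat \<Rightarrow> real" and f :: "real \<Rightarrow> real \<Rightarrow> real"
  assumes sym: "symmetric_on_pos \<Psi>" and ext: "extension_of f \<Psi>" and G: "conn_nm_graph n m V E"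
    and min: "\<forall>V' E'. conn_nm_graph n m V' E' \<longrightarrow> BID \<Psi> E \<le> BID \<Psi> E'"
    and nonpos: "\<forall>x c t y. adm x c t y \<longrightarrow> expr1 f x c t y \<le> 0 \<and> expr2 f x c t \<le> 0"
    and cond: "(decr_both_on_ge1 f \<and>
        ((\<forall>x c t y. adm x c t y \<longrightarrow> expr1 f x c t y < 0) \<or>
         (\<forall>x c t y. adm x c t y \<longrightarrow> expr2 f x c t < 0)))
      \<or> strict_decr_both_on_ge1 f"
  shows "max_degree V E = n - 1"
proof -
  define \<Psi>' f' where "\<Psi>' a b = - \<Psi> a b" and "f' x y = - f x y" for a b x y
  have "BID \<Psi>' E' = - BID \<Psi> E'" for E'
    by (simp add: BID_def \<Psi>'_def sum_negf)
  moreover have "expr1 f' x c t y = - expr1 f x c t y" "expr2 f' x c t = - expr2 f x c t" for x c t y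
    by (simp_all add: expr1_def expr2_def f'_def)
  moreover have "incr_both_on_ge1 f' \<longleftrightarrow> decr_both_on_ge1 f"
    "strict_incr_both_on_ge1 f' \<longleftrightarrow> strict_decr_both_on_ge1 f"
    by (simp_all add: incr_both_on_ge1_def decr_both_on_ge1_def strict_incr_both_on_ge1_def
        strict_decr_both_on_ge1_def f'_def)
  moreover have "symmetric_on_pos \<Psi>'" "extension_of f' \<Psi>'"
    using sym ext by (simp_all add: symmetric_on_pos_def extension_of_def \<Psi>'_def f'_def)
  ultimately show ?thesis
    using max_BID_imp_max_degree[of \<Psi>' f' n m V E] G min nonpos cond by simp
qed

theorem lemma2:
  fixes \<Psi> :: "nat \<Rightarrow> nat \<Rightarrow> real" and f :: "real \<Rightarrow> real \<Rightarrow> real"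
    and n m :: nat and V :: "nat set" and E :: "nat set set"
  assumes Psi_nonneg: "\<And>a b. 1 \<le> a \<Longrightarrow> 1 \<le> b \<Longrightarrow> \<Psi> a b \<ge> 0"
    and Psi_sym: "\<And>a b. 1 \<le> a \<Longrightarrow> 1 \<le> b \<Longrightarrow> \<Psi> a b = \<Psi> b a"
    and f_ext: "\<And>a b. 1 \<le> a \<Longrightarrow> 1 \<le> b \<Longrightarrow> f (real a) (real b) = \<Psi> a b"
    and G: "conn_nm_graph n m V E"
  shows
   "((\<forall>V' E'. conn_nm_graph n m V' E' \<longrightarrow> BID \<Psi> E' \<le> BID \<Psi> E) \<and>
     (\<forall>x c t y. adm x c t y \<longrightarrow> expr1 f x c t y \<ge> 0 \<and> expr2 f x c t \<ge> 0) \<and>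
     ((incr_both_on_ge1 f \<and>
        ((\<forall>x c t y. adm x c t y \<longrightarrow> expr1 f x c t y > 0) \<or>
         (\<forall>x c t y. adm x c t y \<longrightarrow> expr2 f x c t > 0)))
      \<or> strict_incr_both_on_ge1 f)
     \<longrightarrow> max_degree V E = n - 1)
  \<and>
   ((\<forall>V' E'. conn_nm_graph n m V' E' \<longrightarrow> BID \<Psi> E \<le> BID \<Psi> E') \<and>
     (\<forall>x c t y. adm x c t y \<longrightarrow> expr1 f x c t y \<le> 0 \<and> expr2 f x c t \<le> 0) \<and>
     ((decr_both_on_ge1 f \<and>
        ((\<forall>x c t y. adm x c t y \<longrightarrow> expr1 f x c t y < 0) \<or>
         (\<forall>x c t y. adm x c t y \<longrightarrow> expr2 f x c t < 0)))
      \<or> strict_decr_both_on_ge1 f)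
     \<longrightarrow> max_degree V E = n - 1)"
proof -
  have sym: "symmetric_on_pos \<Psi>" using Psi_sym by (simp add: symmetric_on_pos_def)
  have ext: "extension_of f \<Psi>" using f_ext by (simp add: extension_of_def)
  show ?thesis
    using max_BID_imp_max_degree[OF sym ext G] min_BID_imp_max_degree[OF sym ext G] by blast
qed

end
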